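(* For every $\eta\in\mathcal{L}$, $c_\pi(\eta)\in[-B^{1/(1+\epsilon)},\,B^{1/(1+\epsilon)}(1-\pi)^{-1/(1+\epsilon)}]$ and $x_\pi(\eta)\in[-B^{1/(1+\epsilon)}\pi^{-1/(1+\epsilon)},\,B^{1/(1+\epsilon)}(1-\pi)^{-1/(1+\epsilon)}]$.
   Context: $\pi\in(0,1)$, $\epsilon>0$, $B>0$. $\mathcal{L}=\{\eta\in\mathcal{P}(\mathbb{R}):\mathbb{E}_\eta|X|^{1+\epsilon}\le B\}$. $F_\eta(x)=\eta((-\infty,x])$; value-at-risk $x_\pi(\eta)=\min\{z\in\mathbb{R}:F_\eta(z)\ge\pi\}$; conditional value-at-risk $c_\pi(\eta)=\frac{F_\eta(x_\pi(\eta))-\pi}{1-\pi}x_\pi(\eta)+\frac{1}{1-\pi}\int_{(x_\pi(\eta),\infty)}y\,dF_\eta(y)$. *)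

theory Defs
  imports "HOL-Probability.Probability"
begin

definition moment_class :: "real \<Rightarrow> real \<Rightarrow> real measure set" where
  "moment_class eps B = {\<eta>. prob_space \<eta> \<and> sets \<eta> = sets borel \<and>
      (\<integral>\<^sup>+ x. ennreal (\<bar>x\<bar> powr (1 + eps)) \<partial>\<eta>) \<le> ennreal B}"

definition cdf_of :: "real measure \<Rightarrow> real \<Rightarrow> real" where
  "cdf_of \<eta> x = measure \<eta> {..x}"

text \<open>Value-at-risk: the minimum of the (nonempty, closed, bounded-below) set
  of z with F(z) >= pi, written as its infimum.\<close>
definition VaR :: "real \<Rightarrow> real measure \<Rightarrow> real" where
  "VaR p \<eta> = Inf {z. cdf_of \<eta> z \<ge> p}"

definition CVaR :: "real \<Rightarrow> real measure \<Rightarrow> real" where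
  "CVaR p \<eta> = (cdf_of \<eta> (VaR p \<eta>) - p) / (1 - p) * VaR p \<eta>
      + 1 / (1 - p) * (\<integral>y\<in>{VaR p \<eta><..}. y \<partial>\<eta>)"

end

theory Submission
  imports Defs
begin

text \<open>By Markov's inequality for \<open>|X| powr (1 + eps)\<close>, each tail of \<open>\<eta>\<close> beyond \<open>t > 0\<close> has
  mass at most \<open>B / t powr (1 + eps)\<close>, which confines the \<open>\<pi>\<close>-quantile to the stated interval.
  The conditional value-at-risk is \<open>E[X w(X)] / (1 - \<pi>)\<close> for a weight \<open>0 \<le> w \<le> 1\<close> with
  \<open>E[w(X)] = 1 - \<pi>\<close>: the indicator of the tail beyond the quantile plus a share of the atom at it.
  Hoelder's inequality bounds \<open>E[|X| w(X)]\<close> by \<open>B powr (1/(1+eps)) * (1 - \<pi>) powr (eps/(1+eps))\<close>,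
  giving the upper bound; and since \<open>w(X) - (1 - \<pi>)\<close> has the sign of \<open>X - x\<^sub>\<pi>\<close>, the
  conditional value-at-risk is at least \<open>E[X] \<ge> - E|X| \<ge> - B powr (1/(1+eps))\<close>.\<close>

lemma Holder_inequality_weighted:
  fixes M :: "'a measure" and f w :: "'a \<Rightarrow> real" and q K W :: real
  assumes q: "q > 1" and K: "K > 0" and W: "W > 0"
    and int_powr: "integrable M (\<lambda>x. \<bar>f x\<bar> powr q * w x)"
    and int_abs: "integrable M (\<lambda>x. \<bar>f x\<bar> * w x)" and int_w: "integrable M w"
    and w_nonneg: "\<And>x. w x \<ge> 0"
    and powr_le: "(\<integral>x. \<bar>f x\<bar> powr q * w x \<partial>M) \<le> K" and w_eq: "(\<integral>x. w x \<partial>M) = W"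
  shows "(\<integral>x. \<bar>f x\<bar> * w x \<partial>M) \<le> K powr (1/q) * W powr (1 - 1/q)"
proof -
  define r where "r = q / (q - 1)"
  have r: "r > 1" and qr: "1/q + 1/r = 1"
    using q by (simp_all add: r_def field_simps)
  \<comment> \<open>normalisation making the integrated Young terms sum to at most 1\<close>
  define s t where "s = K powr (1/q)" and "t = W powr (-1/r)"
  have st: "s > 0" "t > 0"
    using K W by (simp_all add: s_def t_def)
  have s_powr: "s powr q = K"
    using K q by (simp add: s_def powr_powr)
  have t_powr: "t powr r = 1 / W"
    using W r by (simp add: t_def powr_powr powr_minus_divide powr_divide)
  have Young: "\<bar>f x\<bar> * w x * (t/s) \<le> \<bar>f x\<bar> powr q * w x / (q*K) + w x / (r*W)" for x
  proof -
    have "(\<bar>f x\<bar>/s) * t \<le> (\<bar>f x\<bar>/s) powr q / q + t powr r / r"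
      by (rule Youngs_inequality) (use q r qr st in auto)
    also have "\<dots> = \<bar>f x\<bar> powr q / K / q + 1 / W / r"
      using st by (simp add: powr_divide s_powr t_powr)
    finally show ?thesis
      using mult_right_mono[OF _ w_nonneg[of x]] by (fastforce simp: field_simps)
  qed
  have "(\<integral>x. \<bar>f x\<bar> * w x \<partial>M) * (t/s) = (\<integral>x. \<bar>f x\<bar> * w x * (t/s) \<partial>M)"
    by simp
  also have "\<dots> \<le> (\<integral>x. \<bar>f x\<bar> powr q * w x / (q*K) + w x / (r*W) \<partial>M)"
    using int_powr int_abs int_w Young by (intro integral_mono) auto
  also have "\<dots> = (\<integral>x. \<bar>f x\<bar> powr q * w x \<partial>M) / (q*K) + W / (r*W)"
    using int_powr int_w w_eq by simp
  also have "\<dots> \<le> K / (q*K) + W / (r*W)"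
    using powr_le q K by (intro add_right_mono divide_right_mono) auto
  also have "\<dots> = 1"
    using K W qr by simp
  finally have "(\<integral>x. \<bar>f x\<bar> * w x \<partial>M) \<le> s / t"
    using st by (simp add: field_simps)
  also have "s / t = K powr (1/q) * W powr (1/r)"
    by (simp add: s_def t_def powr_minus divide_inverse)
  also have "1/r = 1 - 1/q"
    using qr by simp
  finally show ?thesis .
qed

lemma integrable_mult_unit_weight:
  fixes f w :: "'a \<Rightarrow> real"
  assumes "integrable M f" "w \<in> borel_measurable M" "\<And>x. 0 \<le> w x" "\<And>x. w x \<le> 1"
  shows "integrable M (\<lambda>x. f x * w x)"
  using assms(1) by (rule Bochner_Integration.integrable_bound)
    (use assms in \<open>auto simp: abs_mult intro!: mult_left_le\<close>)

lemma root_quotient_powr: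
  fixes B c q :: real
  assumes "0 < B" "0 < c" "0 < q"
  shows "(B powr (1/q) * c powr (-1/q)) powr q = B / c"
  using assms by (simp add: powr_mult powr_powr powr_minus_divide powr_divide)

lemma cdf_of_eq_cdf: "cdf_of M = cdf M"
  by (simp add: fun_eq_iff cdf_of_def cdf_def)

context real_distribution
begin

lemma measure_greaterThan_eq: "measure M {x<..} = 1 - cdf M x"
proof -
  have "{x<..} = space M - {..x}"
    by auto
  then show ?thesis
    using prob_compl[of "{..x}"] by (simp add: cdf_def)
qed

lemma VaR_set_nonempty:
  assumes "p < 1"
  shows "{z. p \<le> cdf M z} \<noteq> {}"
proof -
  have "eventually (\<lambda>z. p < cdf M z) at_top"
    using cdf_lim_at_top_prob assms by (rule order_tendstoD)
  then obtain z where "p < cdf M z"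
    by (auto simp: eventually_at_top_linorder)
  then show ?thesis
    by (auto intro: less_imp_le)
qed

lemma VaR_set_bdd_below:
  assumes "0 < p"
  shows "bdd_below {z. p \<le> cdf M z}"
proof -
  have "eventually (\<lambda>z. cdf M z < p) at_bot"
    using cdf_lim_at_bot assms by (rule order_tendstoD)
  then obtain b where "\<And>z. z \<le> b \<Longrightarrow> cdf M z < p"
    by (auto simp: eventually_at_bot_linorder)
  then have "b \<le> z" if "p \<le> cdf M z" for z
    using that by (meson linorder_not_le nle_le)
  then show ?thesis
    by (auto simp: bdd_below_def)
qed

lemma VaR_le:
  assumes "0 < p" "p \<le> cdf M z"
  shows "VaR p M \<le> z"
  unfolding VaR_def cdf_of_eq_cdf
  using assms VaR_set_bdd_below by (intro cInf_lower) auto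

lemma le_VaR:
  assumes "p < 1" "\<And>z. p \<le> cdf M z \<Longrightarrow> L \<le> z"
  shows "L \<le> VaR p M"
  unfolding VaR_def cdf_of_eq_cdf
  using assms VaR_set_nonempty by (intro cInf_greatest) auto

lemma cdf_VaR_ge:
  assumes "0 < p" "p < 1"
  shows "p \<le> cdf M (VaR p M)"
proof -
  have "eventually (\<lambda>z. p \<le> cdf M z) (at_right (VaR p M))"
  proof (rule eventually_at_rightI)
    fix z assume "z \<in> {VaR p M<..<VaR p M + 1}"
    then have "Inf {z. p \<le> cdf M z} < z"
      by (simp add: VaR_def cdf_of_eq_cdf)
    then obtain s where "p \<le> cdf M s" "s < z"
      using cInf_lessD[OF VaR_set_nonempty[OF assms(2)]] by auto
    then show "p \<le> cdf M z"
      using cdf_nondecreasing[of s z] by simp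
  qed simp
  moreover have "(cdf M \<longlongrightarrow> cdf M (VaR p M)) (at_right (VaR p M))"
    using cdf_is_right_cont by (simp add: continuous_within)
  ultimately show ?thesis
    by (intro tendsto_lowerbound) (auto simp: trivial_limit_at_right_real)
qed

lemma measure_lessThan_VaR_le:
  assumes "0 < p"
  shows "measure M {..<VaR p M} \<le> p"
proof -
  have "eventually (\<lambda>z. cdf M z \<le> p) (at_left (VaR p M))"
  proof (rule eventually_at_leftI)
    fix z assume "z \<in> {VaR p M - 1<..<VaR p M}"
    then show "cdf M z \<le> p"
      using VaR_le[OF assms, of z] by fastforce
  qed simp
  then show ?thesis
    using cdf_at_left by (intro tendsto_upperbound) (auto simp: trivial_limit_at_left_real)
qed

end

text \<open>The atom at the value-at-risk receives just the share of its mass that makes the total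
  weight \<open>1 - p\<close>; then \<open>CVaR p M\<close> is the tail-weighted mean. When the atom is null, so is the
  numerator, and the junk value of division by zero does no harm.\<close>

definition VaR_atom_share :: "real \<Rightarrow> real measure \<Rightarrow> real" where
  "VaR_atom_share p M = (cdf_of M (VaR p M) - p) / measure M {VaR p M}"

definition tail_weight :: "real \<Rightarrow> real measure \<Rightarrow> real \<Rightarrow> real" where
  "tail_weight p M y = indicator {VaR p M<..} y + VaR_atom_share p M * indicator {VaR p M} y"

context real_distribution
begin

lemma VaR_atom_share:
  assumes "0 < p" "p < 1"
  shows VaR_atom_share_nonneg: "0 \<le> VaR_atom_share p M"
    and VaR_atom_share_le_one: "VaR_atom_share p M \<le> 1"
    and VaR_atom_share_mass: "VaR_atom_share p M * measure M {VaR p M} = cdf M (VaR p M) - p"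
proof -
  have "{..VaR p M} = {..<VaR p M} \<union> {VaR p M}"
    by auto
  then have "cdf M (VaR p M) = measure M ({..<VaR p M} \<union> {VaR p M})"
    by (simp add: cdf_def)
  also have "\<dots> = measure M {..<VaR p M} + measure M {VaR p M}"
    by (rule finite_measure_Union) auto
  finally have "cdf M (VaR p M) - p \<le> measure M {VaR p M}"
    using measure_lessThan_VaR_le[OF assms(1)] by simp
  moreover have "0 \<le> cdf M (VaR p M) - p"
    using cdf_VaR_ge[OF assms] by simp
  ultimately show "0 \<le> VaR_atom_share p M" "VaR_atom_share p M \<le> 1"
      "VaR_atom_share p M * measure M {VaR p M} = cdf M (VaR p M) - p"
    by (auto simp: VaR_atom_share_def cdf_of_eq_cdf divide_le_eq_1)
qed

lemma tail_weight_nonneg: "0 < p \<Longrightarrow> p < 1 \<Longrightarrow> 0 \<le> tail_weight p M y"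
  using VaR_atom_share_nonneg by (simp add: tail_weight_def)

lemma tail_weight_le_one: "0 < p \<Longrightarrow> p < 1 \<Longrightarrow> tail_weight p M y \<le> 1"
  using VaR_atom_share_le_one by (simp add: tail_weight_def indicator_def)

lemma borel_measurable_tail_weight: "tail_weight p M \<in> borel_measurable M"
  unfolding tail_weight_def[abs_def] by measurable

lemma integrable_mult_tail_weight:
  "0 < p \<Longrightarrow> p < 1 \<Longrightarrow> integrable M f \<Longrightarrow> integrable M (\<lambda>y. f y * tail_weight p M y)"
  by (intro integrable_mult_unit_weight borel_measurable_tail_weight
      tail_weight_nonneg tail_weight_le_one)

lemma integrable_tail_weight: "integrable M (tail_weight p M)"
  by (simp add: tail_weight_def[abs_def] less_top[symmetric])

lemma integral_tail_weight:
  assumes "0 < p" "p < 1"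
  shows "(\<integral>y. tail_weight p M y \<partial>M) = 1 - p"
  using VaR_atom_share_mass[OF assms]
  by (simp add: tail_weight_def[abs_def] measure_greaterThan_eq less_top[symmetric])

lemma CVaR_eq_integral_tail_weight:
  assumes "0 < p" "p < 1" "integrable M (\<lambda>y. y)"
  shows "CVaR p M = (\<integral>y. y * tail_weight p M y \<partial>M) / (1 - p)"
proof -
  have "y * tail_weight p M y
      = indicator {VaR p M<..} y * y + VaR_atom_share p M * VaR p M * indicator {VaR p M} y" for y
    by (simp add: tail_weight_def indicator_def)
  then have "(\<integral>y. y * tail_weight p M y \<partial>M)
      = (\<integral>y\<in>{VaR p M<..}. y \<partial>M) + (cdf M (VaR p M) - p) * VaR p M"
    using assms VaR_atom_share_mass[OF assms(1,2)]
    by (simp add: set_lebesgue_integral_def integrable_real_mult_indicator less_top[symmetric]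
        mult.commute)
  then show ?thesis
    by (simp add: CVaR_def cdf_of_eq_cdf add_divide_distrib)
qed

lemma expectation_le_CVaR:
  assumes "0 < p" "p < 1" "integrable M (\<lambda>y. y)"
  shows "expectation (\<lambda>y. y) \<le> CVaR p M"
proof -
  let ?x = "VaR p M" and ?w = "tail_weight p M"
  \<comment> \<open>\<open>0 \<le> (y - ?x) * (?w y - (1 - p))\<close>: the weight exceeds its mean exactly right of \<open>?x\<close>\<close>
  have pointwise: "(1 - p) * y \<le> y * ?w y + ?x * ((1 - p) - ?w y)" for y
  proof (cases y ?x rule: linorder_cases)
    case less
    then have "?w y = 0"
      by (simp add: tail_weight_def)
    then show ?thesis
      using less assms by (simp add: mult_right_mono)
  next
    case greater
    then have "?w y = 1"
      by (simp add: tail_weight_def)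
    then show ?thesis
      using greater assms by (simp add: algebra_simps)
  qed (simp add: algebra_simps)
  have "(1 - p) * expectation (\<lambda>y. y) = (\<integral>y. (1 - p) * y \<partial>M)"
    by simp
  also have "\<dots> \<le> (\<integral>y. y * ?w y + ?x * ((1 - p) - ?w y) \<partial>M)"
    using assms pointwise integrable_tail_weight
    by (intro integral_mono Bochner_Integration.integrable_add integrable_mult_tail_weight) auto
  also have "\<dots> = (\<integral>y. y * ?w y \<partial>M)"
    using assms integrable_tail_weight prob_space
    by (simp add: integrable_mult_tail_weight integral_tail_weight integral_diff)
  finally show ?thesis
    using assms by (simp add: CVaR_eq_integral_tail_weight field_simps)
qed

end

locale moment_bounded_distribution = real_distribution M for M :: "real measure" +
  fixes q B :: real
  assumes one_less_q: "1 < q" and B_pos: "0 < B"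
    and abs_moment_le: "(\<integral>\<^sup>+ x. ennreal (\<bar>x\<bar> powr q) \<partial>M) \<le> ennreal B"
begin

lemma integrable_abs_powr: "integrable M (\<lambda>x. \<bar>x\<bar> powr q)"
  using abs_moment_le by (intro integrableI_bounded) (auto simp: top_unique less_top[symmetric])

lemma integral_abs_powr_le: "(\<integral>x. \<bar>x\<bar> powr q \<partial>M) \<le> B"
proof -
  have "ennreal (\<integral>x. \<bar>x\<bar> powr q \<partial>M) = (\<integral>\<^sup>+ x. ennreal (\<bar>x\<bar> powr q) \<partial>M)"
    using integrable_abs_powr by (intro nn_integral_eq_integral[symmetric]) auto
  also have "\<dots> \<le> ennreal B"
    by (rule abs_moment_le)
  finally show ?thesis
    using B_pos by (simp add: ennreal_le_iff)
qed

lemma integrable_ident: "integrable M (\<lambda>x. x)"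
proof (rule Bochner_Integration.integrable_bound)
  show "integrable M (\<lambda>x. 1 + \<bar>x\<bar> powr q)"
    using integrable_abs_powr by simp
  have "\<bar>x\<bar> \<le> 1 + \<bar>x\<bar> powr q" for x :: real
  proof (cases "\<bar>x\<bar> \<le> 1")
    case False
    then have "\<bar>x\<bar> powr 1 \<le> \<bar>x\<bar> powr q"
      using one_less_q by (intro powr_mono) auto
    then show ?thesis
      using False by simp
  qed (simp add: add_increasing2)
  then show "AE x in M. norm x \<le> norm (1 + \<bar>x\<bar> powr q)"
    by simp
qed simp

lemma prob_abs_ge_le:
  assumes "0 < t"
  shows "measure M {x. t \<le> \<bar>x\<bar>} \<le> B / t powr q"
proof -
  have "measure M {x. t \<le> \<bar>x\<bar>} \<le> measure M {x\<in>space M. t powr q \<le> \<bar>x\<bar> powr q}"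
    using assms one_less_q by (intro finite_measure_mono) (auto intro: powr_mono2)
  also have "\<dots> \<le> (\<integral>x. \<bar>x\<bar> powr q \<partial>M) / t powr q"
    using integrable_abs_powr assms by (intro integral_Markov_inequality_measure[where A=UNIV]) auto
  also have "\<dots> \<le> B / t powr q"
    using integral_abs_powr_le assms by (simp add: divide_right_mono)
  finally show ?thesis .
qed

lemma VaR_le_bound:
  assumes "0 < p" "p < 1"
  shows "VaR p M \<le> B powr (1/q) * (1 - p) powr (-1/q)"
proof (rule VaR_le[OF assms(1)])
  let ?U = "B powr (1/q) * (1 - p) powr (-1/q)"
  have U_pos: "0 < ?U"
    using B_pos assms by simp
  have "1 - cdf M ?U = measure M {?U<..}"
    by (simp add: measure_greaterThan_eq)
  also have "\<dots> \<le> measure M {x. ?U \<le> \<bar>x\<bar>}"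
    by (intro finite_measure_mono) auto
  also have "\<dots> \<le> B / ?U powr q"
    using U_pos by (rule prob_abs_ge_le)
  also have "\<dots> = 1 - p"
    using root_quotient_powr[of B "1 - p" q] B_pos assms one_less_q by simp
  finally show "p \<le> cdf M ?U"
    by simp
qed

lemma VaR_ge_bound:
  assumes "0 < p" "p < 1"
  shows "- (B powr (1/q)) * p powr (-1/q) \<le> VaR p M"
proof (rule le_VaR[OF assms(2)])
  let ?L = "B powr (1/q) * p powr (-1/q)"
  fix z assume z: "p \<le> cdf M z"
  show "- (B powr (1/q)) * p powr (-1/q) \<le> z"
  proof (rule ccontr)
    assume "\<not> - (B powr (1/q)) * p powr (-1/q) \<le> z"
    then have L_lt: "?L < - z" and L_pos: "0 < ?L"
      using B_pos assms by auto
    have "cdf M z \<le> measure M {x. - z \<le> \<bar>x\<bar>}"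
      unfolding cdf_def by (intro finite_measure_mono) auto
    also have "\<dots> \<le> B / (- z) powr q"
      using L_lt L_pos by (intro prob_abs_ge_le) simp
    also have "\<dots> < B / ?L powr q"
      using L_lt L_pos B_pos one_less_q
      by (intro divide_strict_left_mono powr_less_mono2 mult_pos_pos) auto
    also have "\<dots> = p"
      using root_quotient_powr[of B p q] B_pos assms one_less_q by simp
    finally show False
      using z by simp
  qed
qed

lemma CVaR_le_bound:
  assumes "0 < p" "p < 1"
  shows "CVaR p M \<le> B powr (1/q) * (1 - p) powr (-1/q)"
proof -
  let ?w = "tail_weight p M"
  have int_abs_w: "integrable M (\<lambda>y. \<bar>y\<bar> * ?w y)"
    using assms integrable_ident by (intro integrable_mult_tail_weight) auto
  have int_powr_w: "integrable M (\<lambda>y. \<bar>y\<bar> powr q * ?w y)"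
    using assms integrable_abs_powr by (rule integrable_mult_tail_weight)
  have "(\<integral>y. y * ?w y \<partial>M) \<le> (\<integral>y. \<bar>y\<bar> * ?w y \<partial>M)"
    using assms integrable_ident int_abs_w tail_weight_nonneg
    by (intro integral_mono integrable_mult_tail_weight mult_right_mono) auto
  also have "\<dots> \<le> B powr (1/q) * (1 - p) powr (1 - 1/q)"
  proof (rule Holder_inequality_weighted[OF one_less_q B_pos _ int_powr_w int_abs_w])
    have "(\<integral>y. \<bar>y\<bar> powr q * ?w y \<partial>M) \<le> (\<integral>y. \<bar>y\<bar> powr q \<partial>M)"
      using assms int_powr_w integrable_abs_powr tail_weight_le_one
      by (intro integral_mono mult_left_le) auto
    then show "(\<integral>y. \<bar>y\<bar> powr q * ?w y \<partial>M) \<le> B"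
      using integral_abs_powr_le by linarith
  qed (use assms integrable_tail_weight integral_tail_weight tail_weight_nonneg in auto)
  also have "\<dots> = (1 - p) * (B powr (1/q) * (1 - p) powr (-1/q))"
    using assms powr_add[of "1 - p" 1 "-1/q"] by simp
  finally show ?thesis
    using assms by (simp add: CVaR_eq_integral_tail_weight integrable_ident field_simps)
qed

lemma expectation_ge_bound: "- (B powr (1/q)) \<le> expectation (\<lambda>x. x)"
proof -
  have "(\<integral>x. \<bar>x\<bar> * 1 \<partial>M) \<le> B powr (1/q) * 1 powr (1 - 1/q)"
  proof (rule Holder_inequality_weighted[OF one_less_q B_pos zero_less_one])
    show "integrable M (\<lambda>x. \<bar>x\<bar> powr q * 1)" "(\<integral>x. \<bar>x\<bar> powr q * 1 \<partial>M) \<le> B"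
      using integrable_abs_powr integral_abs_powr_le by simp_all
    show "integrable M (\<lambda>x. \<bar>x\<bar> * 1)"
      using integrable_ident by simp
  qed (use prob_space in simp_all)
  moreover have "(\<integral>x. - \<bar>x\<bar> \<partial>M) \<le> expectation (\<lambda>x. x)"
    using integrable_ident by (intro integral_mono) auto
  ultimately show ?thesis
    by simp
qed

lemma CVaR_ge_bound: "0 < p \<Longrightarrow> p < 1 \<Longrightarrow> - (B powr (1/q)) \<le> CVaR p M"
  using expectation_ge_bound expectation_le_CVaR integrable_ident by (meson order_trans)

end

theorem lemma1:
  fixes p eps B :: real and \<eta> :: "real measure"
  assumes "0 < p" "p < 1" "eps > 0" "B > 0"
    and "\<eta> \<in> moment_class eps B"
  shows "CVaR p \<eta> \<in> {- (B powr (1 / (1 + eps))) ..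
                        B powr (1 / (1 + eps)) * (1 - p) powr (- 1 / (1 + eps))}
       \<and> VaR p \<eta> \<in> {- (B powr (1 / (1 + eps))) * p powr (- 1 / (1 + eps)) ..
                        B powr (1 / (1 + eps)) * (1 - p) powr (- 1 / (1 + eps))}"
proof -
  have "prob_space \<eta>" "sets \<eta> = sets borel"
    and moment: "(\<integral>\<^sup>+ x. ennreal (\<bar>x\<bar> powr (1 + eps)) \<partial>\<eta>) \<le> ennreal B"
    using assms(5) by (auto simp: moment_class_def)
  then have "real_distribution \<eta>"
    by (simp add: real_distribution_def real_distribution_axioms_def)
  then interpret moment_bounded_distribution \<eta> "1 + eps" B
    using assms(3,4) moment
    by (simp add: moment_bounded_distribution_def moment_bounded_distribution_axioms_def)
  show ?thesis
    using CVaR_ge_bound[OF assms(1,2)] CVaR_le_bound[OF assms(1,2)]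
      VaR_ge_bound[OF assms(1,2)] VaR_le_bound[OF assms(1,2)]
    by (simp only: atLeastAtMost_iff)
qed

end
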